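(* Fix a base $B>1$ and real numbers $a<b\le0$. Let $\mathfrak{B}_0$ be a fixed $m$-dimensional box and let $\mathfrak{B}_0\supset\mathfrak{B}_1\supset\cdots$ be a linear-fragmentation process whose proportion cuts $P_i^{(n)}$ are all identically distributed with $\log_B P_i^{(n)}$ uniform on $(a,b)$. Then the sequence of frame perimeters $\mathrm{Vol}_1(\mathfrak{B}_n)$ converges to strong Benford behavior in base $B$ as $n\to\infty$.
   Context: Significand: for $x>0$, $S_B(x)$ is the unique number in $[1,B)$ with $\log_B x-\log_B S_B(x)\in\mathbb{Z}$. A sequence of positive random variables $X^{(n)}$ converges to strong Benford behavior in base $B$ if $\mathbb{P}(S_B(X^{(n)})\le D)\to\log_B D$ for every $D\in[1,B]$. An $m$-dimensional box is a set $\prod_{i=1}^m[a_i,b_i]$ with finite $a_i<b_i$. For such a box $\mathfrak{B}$ and $1\le d\le m$, $\mathrm{Vol}_d(\mathfrak{B}):=2^{m-d}\sum_{|I|=d}\prod_{i\in I}(b_i-a_i)$, summing over $I\subset\{1,\dots,m\}$ with $|I|=d$; in particular $\mathrm{Vol}_1(\mathfrak{B})=2^{m-1}\sum_{i=1}^m(b_i-a_i)$. A linear-fragmentation process is a sequence of random $m$-dimensional boxes $\mathfrak{B}_0\supset\mathfrak{B}_1\supset\cdots$ where at each step $n\ge1$ independent proportion cuts $P_1^{(n)},\dots,P_m^{(n)}\in(0,1)$ are drawn (independent across $i$ and $n$) and the $i$-th side length of $\mathfrak{B}_{n-1}$ is multiplied by $P_i^{(n)}$ to give that of $\mathfrak{B}_n$.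 *)

theory Defs
  imports "HOL-Probability.Probability"
begin

definition significand :: "real \<Rightarrow> real \<Rightarrow> real" where
  "significand B x = (THE s. 1 \<le> s \<and> s < B \<and> log B x - log B s \<in> \<int>)"

definition strong_benford_conv :: "'a measure \<Rightarrow> real \<Rightarrow> (nat \<Rightarrow> 'a \<Rightarrow> real) \<Rightarrow> bool" where
  "strong_benford_conv M B X \<longleftrightarrow>
     (\<forall>D\<in>{1..B}. (\<lambda>n. measure M {\<omega>\<in>space M. significand B (X n \<omega>) \<le> D}) \<longlonglongrightarrow> log B D)"

text \<open>An m-dimensional box, represented by its lower and upper corners (coordinates 0..m-1).\<close>
type_synonym box = "(nat \<Rightarrow> real) \<times> (nat \<Rightarrow> real)"

definition is_box :: "nat \<Rightarrow> box \<Rightarrow> bool" where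
  "is_box m bx \<longleftrightarrow> (\<forall>i<m. fst bx i < snd bx i)"

definition box_set :: "nat \<Rightarrow> box \<Rightarrow> (nat \<Rightarrow> real) set" where
  "box_set m bx = {x. \<forall>i<m. fst bx i \<le> x i \<and> x i \<le> snd bx i}"

definition side_len :: "box \<Rightarrow> nat \<Rightarrow> real" where
  "side_len bx i = snd bx i - fst bx i"

definition Vol :: "nat \<Rightarrow> nat \<Rightarrow> box \<Rightarrow> real" where
  "Vol m d bx = 2 ^ (m - d) * (\<Sum>I\<in>{I. I \<subseteq> {0..<m} \<and> card I = d}. \<Prod>i\<in>I. side_len bx i)"

end

theory Submission
  imports Defs
begin

text \<open>
  Let \<open>s\<^sub>n\<close> be the vector whose \<open>i\<close>-th entry is \<open>log\<^sub>B\<close> of the product of the first \<open>n\<close>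
  cuts in direction \<open>i\<close>. Then \<open>log\<^sub>B Vol\<^sub>1(\<B>\<^sub>n) = G(s\<^sub>n)\<close> for a function \<open>G\<close>
  with \<open>G(s + t(1,\<dots>,1)) = G(s) + t\<close>, so the probability that the significand is at most \<open>D\<close>
  equals \<open>E h(s\<^sub>n)\<close>, where the indicator \<open>h\<close> of \<open>frac (G s) \<le> log\<^sub>B D\<close> has mean
  \<open>log\<^sub>B D\<close> on every diagonal segment of length 1. The expectation \<open>E h(s\<^sub>n)\<close> is obtained by
  applying to \<open>h\<close> the operators that convolve one coordinate with the uniform law on \<open>[a,b]\<close>.
  After \<open>K\<close> such steps in every coordinate, each coordinate has received a kick whose density is
  bounded below on an interval of length at least 2, so the resulting operator \<open>W\<close> satisfies the
  Doeblin bound \<open>W g \<ge> q \<cdot> (diagonal mean of g)\<close> for \<open>g \<ge> 0\<close>. Since \<open>W\<close> also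
  preserves diagonal means, \<open>W\<^sup>j h\<close> is within \<open>O((1 - q)\<^sup>j)\<close> of \<open>log\<^sub>B D\<close>.
\<close>

section \<open>Convolution in one coordinate\<close>

abbreviation coords :: "(nat \<Rightarrow> real) measure" where
  "coords \<equiv> PiM UNIV (\<lambda>_. borel)"

definition conv_at :: "real measure \<Rightarrow> nat \<Rightarrow> ((nat \<Rightarrow> real) \<Rightarrow> real) \<Rightarrow> (nat \<Rightarrow> real) \<Rightarrow> real" where
  "conv_at \<nu> i g s = (\<integral>v. g (s(i := s i + v)) \<partial>\<nu>)"

definition bdd_meas :: "((nat \<Rightarrow> real) \<Rightarrow> real) \<Rightarrow> bool" where
  "bdd_meas g \<longleftrightarrow> g \<in> borel_measurable coords \<and> (\<exists>C. \<forall>s. \<bar>g s\<bar> \<le> C)"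

definition borel_prob :: "real measure \<Rightarrow> bool" where
  "borel_prob \<nu> \<longleftrightarrow> prob_space \<nu> \<and> sets \<nu> = sets borel"

lemma space_coords[simp]: "space coords = UNIV"
  by (simp add: space_PiM)

lemma measurable_add_at[measurable (raw)]:
  assumes [measurable]: "f \<in> measurable N coords" "h \<in> borel_measurable N"
  shows "(\<lambda>x. (f x)(i := f x i + h x)) \<in> measurable N coords"
  by (rule measurable_fun_upd[where J=UNIV]) auto

lemma measurable_add_at_pair[measurable]:
  "(\<lambda>(s::nat\<Rightarrow>real, v::real). s(i := s i + v)) \<in> measurable (coords \<Otimes>\<^sub>M borel) coords"
proof -
  have "(\<lambda>p::(nat\<Rightarrow>real)\<times>real. (fst p)(i := fst p i + snd p)) \<in> measurable (coords \<Otimes>\<^sub>M borel) coords"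
    by measurable
  then show ?thesis by (simp add: case_prod_beta')
qed

lemma borel_prob_measurable:
  assumes "borel_prob \<nu>"
  shows "measurable \<nu> = measurable borel" "measurable (N \<Otimes>\<^sub>M \<nu>) = measurable (N \<Otimes>\<^sub>M borel)"
  using assms unfolding borel_prob_def
  by (auto intro!: ext measurable_cong_sets sets_pair_measure_cong)

lemma integrable_bounded:
  fixes f :: "_ \<Rightarrow> real"
  assumes "finite_measure N" "f \<in> borel_measurable N" "\<And>x. \<bar>f x\<bar> \<le> C"
  shows "integrable N f"
  using assms by (intro finite_measure.integrable_const_bound[where B=C]) auto

lemma bdd_meas_conv_at:
  assumes "borel_prob \<nu>" "bdd_meas g" shows "bdd_meas (conv_at \<nu> i g)"
proof -
  from assms obtain C where C: "\<And>s. \<bar>g s\<bar> \<le> C" and gm[measurable]: "g \<in> borel_measurable coords"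
    unfolding bdd_meas_def by auto
  have C0: "0 \<le> C" using C[of undefined] by simp
  interpret prob_space \<nu> using assms unfolding borel_prob_def by auto
  have "(\<lambda>(s, v). g (s(i := s i + v))) \<in> borel_measurable (coords \<Otimes>\<^sub>M \<nu>)"
    unfolding borel_prob_measurable(2)[OF assms(1)] by measurable
  then have m: "conv_at \<nu> i g \<in> borel_measurable coords"
    unfolding conv_at_def by (intro borel_measurable_lebesgue_integral) (simp add: case_prod_beta')
  have "\<bar>conv_at \<nu> i g s\<bar> \<le> C" for s
  proof -
    have "\<bar>conv_at \<nu> i g s\<bar> \<le> \<integral>v. \<bar>g (s(i := s i + v))\<bar> \<partial>\<nu>" unfolding conv_at_def
      by (rule integral_abs_bound)
    also have "\<dots> \<le> \<integral>v. C \<partial>\<nu>"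
      by (intro integral_mono integrable_bounded[where C=C] finite_measure_axioms)
        (auto simp: C C0 borel_prob_measurable[OF assms(1)])
    finally show ?thesis using C[of s] by (simp add: prob_space)
  qed
  with m show ?thesis unfolding bdd_meas_def by auto
qed

lemma integrable_conv_at_integrand:
  assumes "borel_prob \<nu>" "bdd_meas g" shows "integrable \<nu> (\<lambda>v. g (s(i := s i + v)))"
proof -
  from assms obtain C where C: "\<And>s. \<bar>g s\<bar> \<le> C" and gm[measurable]: "g \<in> borel_measurable coords"
    unfolding bdd_meas_def by auto
  interpret prob_space \<nu> using assms unfolding borel_prob_def by auto
  show ?thesis
    by (intro integrable_bounded[where C=C] finite_measure_axioms)
      (auto simp: C borel_prob_measurable[OF assms(1)])
qed

lemma conv_at_mono:
  assumes "borel_prob \<nu>" "bdd_meas f" "bdd_meas g" "\<And>s. f s \<le> g s"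
  shows "conv_at \<nu> i f s \<le> conv_at \<nu> i g s"
  unfolding conv_at_def by (intro integral_mono integrable_conv_at_integrand assms)

lemma conv_at_nonneg: "borel_prob \<nu> \<Longrightarrow> (\<And>s. 0 \<le> g s) \<Longrightarrow> 0 \<le> conv_at \<nu> i g s"
  unfolding conv_at_def by (auto intro: integral_nonneg_AE)

lemma conv_at_add:
  "borel_prob \<nu> \<Longrightarrow> bdd_meas f \<Longrightarrow> bdd_meas g \<Longrightarrow>
    conv_at \<nu> i (\<lambda>s. f s + g s) s = conv_at \<nu> i f s + conv_at \<nu> i g s"
  unfolding conv_at_def by (intro Bochner_Integration.integral_add integrable_conv_at_integrand)

lemma conv_at_cmult: "conv_at \<nu> i (\<lambda>s. c * f s) s = c * conv_at \<nu> i f s"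
  unfolding conv_at_def by simp

lemma bdd_meas_const[simp]: "bdd_meas (\<lambda>_. c)"
  unfolding bdd_meas_def by auto

lemma bdd_meas_add: "bdd_meas f \<Longrightarrow> bdd_meas g \<Longrightarrow> bdd_meas (\<lambda>s. f s + g s)"
  unfolding bdd_meas_def
  by (auto intro!: exI[of _ "_ + _"] abs_triangle_ineq[THEN order_trans] add_mono)

lemma bdd_meas_cmult: "bdd_meas f \<Longrightarrow> bdd_meas (\<lambda>s. c * f s)"
  unfolding bdd_meas_def by (auto simp: abs_mult intro!: exI[of _ "\<bar>c\<bar> * _"] mult_left_mono)

lemma bdd_meas_add_at: "bdd_meas F \<Longrightarrow> bdd_meas (\<lambda>s. F (s(j := s j + t)))"
proof -
  assume "bdd_meas F"
  then obtain C where C: "\<And>s. \<bar>F s\<bar> \<le> C" and Fm: "F \<in> borel_measurable coords"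
    unfolding bdd_meas_def by auto
  have "(\<lambda>s::nat\<Rightarrow>real. s(j := s j + t)) \<in> measurable coords coords" by measurable
  then show ?thesis using C Fm unfolding bdd_meas_def by (auto intro: measurable_compose)
qed

lemma conv_at_const[simp]: "borel_prob \<nu> \<Longrightarrow> conv_at \<nu> i (\<lambda>_. c) s = c"
  unfolding conv_at_def borel_prob_def by (simp add: prob_space.prob_space)

lemma conv_at_affine:
  "borel_prob \<nu> \<Longrightarrow> bdd_meas g \<Longrightarrow> conv_at \<nu> i (\<lambda>s. \<alpha> * g s + \<beta>) s = \<alpha> * conv_at \<nu> i g s + \<beta>"
  by (subst conv_at_add) (auto intro: bdd_meas_cmult simp: conv_at_cmult)

lemma conv_at_equivariant:
  assumes "\<And>s v. \<sigma> (s(i := s i + v)) = (\<sigma> s)(i := \<sigma> s i + v)"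
  shows "conv_at \<nu> i (\<lambda>s. g (\<sigma> s)) s = conv_at \<nu> i g (\<sigma> s)"
  unfolding conv_at_def assms ..

lemma integral_swap_borel_prob:
  fixes f :: "real \<Rightarrow> real \<Rightarrow> real"
  assumes "borel_prob \<nu>" "borel_prob \<mu>"
    and f[measurable]: "(\<lambda>(u,v). f u v) \<in> borel_measurable (borel \<Otimes>\<^sub>M borel)"
    and C: "\<And>u v. \<bar>f u v\<bar> \<le> C"
  shows "(\<integral>u. \<integral>v. f u v \<partial>\<mu> \<partial>\<nu>) = (\<integral>v. \<integral>u. f u v \<partial>\<nu> \<partial>\<mu>)"
proof -
  interpret N: prob_space \<nu> using assms unfolding borel_prob_def by auto
  interpret M: prob_space \<mu> using assms unfolding borel_prob_def by auto
  interpret P: pair_sigma_finite \<nu> \<mu> by unfold_locales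
  interpret NM: prob_space "\<nu> \<Otimes>\<^sub>M \<mu>" by (rule prob_space_pair) unfold_locales
  have mm: "measurable (\<nu> \<Otimes>\<^sub>M \<mu>) = measurable (borel \<Otimes>\<^sub>M borel)"
    using assms(1,2) unfolding borel_prob_def
    by (auto intro!: ext measurable_cong_sets sets_pair_measure_cong)
  have int: "integrable (\<nu> \<Otimes>\<^sub>M \<mu>) (\<lambda>(u, v). f u v)"
    by (intro integrable_bounded[where C=C] NM.finite_measure_axioms) (auto simp: C mm)
  show ?thesis using P.Fubini_integral[OF int] by simp
qed

lemma bdd_meas_conv_at_pow: "borel_prob \<nu> \<Longrightarrow> bdd_meas g \<Longrightarrow> bdd_meas ((conv_at \<nu> i ^^ n) g)"
  by (induction n) (auto intro: bdd_meas_conv_at)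

lemma conv_at_pow_affine:
  "borel_prob \<nu> \<Longrightarrow> bdd_meas g \<Longrightarrow>
    (conv_at \<nu> i ^^ n) (\<lambda>s. \<alpha> * g s + \<beta>) s = \<alpha> * (conv_at \<nu> i ^^ n) g s + \<beta>"
proof (induction n arbitrary: s)
  case (Suc n)
  have "(conv_at \<nu> i ^^ n) (\<lambda>s. \<alpha> * g s + \<beta>) = (\<lambda>s. \<alpha> * (conv_at \<nu> i ^^ n) g s + \<beta>)"
    by (rule ext) (rule Suc.IH[OF Suc.prems])
  then show ?case using Suc.prems by (simp add: conv_at_affine bdd_meas_conv_at_pow)
qed simp

lemma conv_at_pow_mono:
  "borel_prob \<nu> \<Longrightarrow> bdd_meas f \<Longrightarrow> bdd_meas g \<Longrightarrow> (\<And>s. f s \<le> g s) \<Longrightarrow>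
    (conv_at \<nu> i ^^ n) f s \<le> (conv_at \<nu> i ^^ n) g s"
  by (induction n arbitrary: s) (auto intro!: conv_at_mono bdd_meas_conv_at_pow)

lemma conv_at_pow_bounds:
  "borel_prob \<nu> \<Longrightarrow> bdd_meas g \<Longrightarrow> (\<And>s. lo \<le> g s \<and> g s \<le> hi) \<Longrightarrow>
    lo \<le> (conv_at \<nu> i ^^ n) g s \<and> (conv_at \<nu> i ^^ n) g s \<le> hi"
  using conv_at_pow_mono[where f="\<lambda>_. lo" and g=g and \<nu>=\<nu> and i=i and n=n and s=s]
    conv_at_pow_mono[where g="\<lambda>_. hi" and f=g and \<nu>=\<nu> and i=i and n=n and s=s]
    conv_at_pow_affine[where g="\<lambda>_. 0" and \<alpha>=0 and \<beta>=lo and \<nu>=\<nu> and i=i and n=n and s=s]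
    conv_at_pow_affine[where g="\<lambda>_. 0" and \<alpha>=0 and \<beta>=hi and \<nu>=\<nu> and i=i and n=n and s=s]
  by simp

primrec conv_upto :: "real measure \<Rightarrow> nat \<Rightarrow> ((nat \<Rightarrow> real) \<Rightarrow> real) \<Rightarrow> (nat \<Rightarrow> real) \<Rightarrow> real" where
  "conv_upto \<nu> 0 g = g"
| "conv_upto \<nu> (Suc j) g = conv_at \<nu> j (conv_upto \<nu> j g)"

lemma bdd_meas_conv_upto: "borel_prob \<nu> \<Longrightarrow> bdd_meas g \<Longrightarrow> bdd_meas (conv_upto \<nu> j g)"
  by (induction j) (auto intro: bdd_meas_conv_at)

lemma conv_upto_nonneg: "borel_prob \<nu> \<Longrightarrow> (\<And>s. 0 \<le> g s) \<Longrightarrow> 0 \<le> conv_upto \<nu> j g s"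
  by (induction j arbitrary: s) (auto intro!: conv_at_nonneg)

lemma conv_upto_equivariant:
  assumes "\<And>i s v. i < j \<Longrightarrow> \<sigma> (s(i := s i + v)) = (\<sigma> s)(i := \<sigma> s i + v)"
  shows "conv_upto \<nu> j (\<lambda>s. g (\<sigma> s)) s = conv_upto \<nu> j g (\<sigma> s)"
  using assms
proof (induction j arbitrary: s)
  case (Suc j)
  have "conv_upto \<nu> (Suc j) (\<lambda>s. g (\<sigma> s)) s = conv_at \<nu> j (\<lambda>s. conv_upto \<nu> j g (\<sigma> s)) s"
    using Suc by (simp add: conv_at_def)
  also have "\<dots> = conv_at \<nu> j (conv_upto \<nu> j g) (\<sigma> s)"
    by (rule conv_at_equivariant) (rule Suc.prems, simp)
  finally show ?case by simp
qed simp

section \<open>Uniform kicks\<close>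

lemma prob_space_uniform_Icc: "p < q \<Longrightarrow> prob_space (uniform_measure lborel {p..q::real})"
  by (intro prob_space_uniform_measure) auto

lemma borel_prob_uniform_Icc: "p < q \<Longrightarrow> borel_prob (uniform_measure lborel {p..q::real})"
  unfolding borel_prob_def by (auto intro: prob_space_uniform_Icc)

lemma ennreal_integral_uniform_Icc:
  fixes f :: "real \<Rightarrow> real"
  assumes pq: "p < q" and f[measurable]: "f \<in> borel_measurable borel"
    and f0: "\<And>x. 0 \<le> f x" and C: "\<And>x. f x \<le> C"
  shows "ennreal (\<integral>x. f x \<partial>uniform_measure lborel {p..q}) =
    ennreal (1/(q-p)) * (\<integral>\<^sup>+x. ennreal (f x) * indicator {p..q} x \<partial>lborel)"
proof -
  let ?U = "uniform_measure lborel {p..q}"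
  interpret prob_space ?U using prob_space_uniform_Icc[OF pq] .
  have "integrable ?U f"
    by (intro integrable_bounded[where C=C] finite_measure_axioms) (auto simp: f0 C abs_of_nonneg)
  then have "ennreal (\<integral>x. f x \<partial>?U) = (\<integral>\<^sup>+x. ennreal (f x) \<partial>?U)"
    by (subst nn_integral_eq_integral) (auto simp: f0)
  also have "\<dots> = (\<integral>\<^sup>+x. ennreal (f x) * indicator {p..q} x \<partial>lborel) / ennreal (q - p)"
    using pq by (subst nn_integral_uniform_measure) auto
  also have "\<dots> = ennreal (1/(q-p)) * (\<integral>\<^sup>+x. ennreal (f x) * indicator {p..q} x \<partial>lborel)"
    using pq by (simp add: divide_ennreal_def inverse_ennreal mult.commute inverse_eq_divide)
  finally show ?thesis .
qed

lemma interval_overlap_ge: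
  fixes a b c l x :: real
  assumes ab: "a < b" and l: "b - a \<le> l" and x: "c + a + (b-a)/4 \<le> x" "x \<le> c + l + b - (b-a)/4"
  shows "ennreal ((b-a)/4) \<le> (\<integral>\<^sup>+y. indicator {a..b} (x - y) * indicator {c..c+l} y \<partial>lborel)"
proof -
  define p where "p = max (x-b) c"
  define q where "q = min (x-a) (c+l)"
  have pq: "(b-a)/4 \<le> q - p"
    using assms unfolding p_def q_def by (auto simp: field_simps min_def max_def)
  have "ennreal ((b-a)/4) \<le> ennreal (q - p)"
    using pq by (intro ennreal_leI)
  also have "\<dots> = emeasure lborel {p..q}"
    using pq ab by (simp add: emeasure_lborel_Icc)
  also have "\<dots> \<le> emeasure lborel ({y. a \<le> x - y \<and> x - y \<le> b} \<inter> {c..c+l})"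
    by (intro emeasure_mono) (auto simp: p_def q_def)
  also have "\<dots> = (\<integral>\<^sup>+y. indicator ({y. a \<le> x - y \<and> x - y \<le> b} \<inter> {c..c+l}) y \<partial>lborel)"
    by (intro nn_integral_indicator[symmetric]) measurable
  also have "\<dots> = (\<integral>\<^sup>+y. indicator {a..b} (x - y) * indicator {c..c+l} y \<partial>lborel)"
    by (intro nn_integral_cong) (auto simp: indicator_def)
  finally show ?thesis .
qed

lemma ennreal_integral_uniform_translate:
  fixes \<psi> :: "real \<Rightarrow> real"
  assumes ab: "a < b" and \<psi>[measurable]: "\<psi> \<in> borel_measurable borel"
    and \<psi>0: "\<And>x. 0 \<le> \<psi> x" and C: "\<And>x. \<psi> x \<le> C"
  shows "ennreal (\<integral>v. \<psi> (y+v) \<partial>uniform_measure lborel {a..b}) =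
    ennreal (1/(b-a)) * (\<integral>\<^sup>+x. ennreal (\<psi> x) * indicator {a..b} (x - y) \<partial>lborel)"
proof -
  have "ennreal (\<integral>v. \<psi> (y+v) \<partial>uniform_measure lborel {a..b}) =
      ennreal (1/(b-a)) * (\<integral>\<^sup>+v. ennreal (\<psi> (y+v)) * indicator {a..b} v \<partial>lborel)"
    by (rule ennreal_integral_uniform_Icc[OF ab, where C=C]) (auto simp: \<psi>0 C)
  also have "(\<integral>\<^sup>+v. ennreal (\<psi> (y+v)) * indicator {a..b} v \<partial>lborel) =
      (\<integral>\<^sup>+x. ennreal (\<psi> x) * indicator {a..b} (x - y) \<partial>lborel)"
    using nn_integral_real_affine[of "\<lambda>x. ennreal (\<psi> x) * indicator {a..b} (x - y)" 1 y] by simp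
  finally show ?thesis .
qed

lemma borel_measurable_integral_uniform_translate:
  fixes \<psi> :: "real \<Rightarrow> real"
  assumes ab: "a < b" and \<psi>[measurable]: "\<psi> \<in> borel_measurable borel"
  shows "(\<lambda>y. \<integral>v. \<psi> (y+v) \<partial>uniform_measure lborel {a..b}) \<in> borel_measurable borel"
proof -
  interpret prob_space "uniform_measure lborel {a..b}" using prob_space_uniform_Icc[OF ab] .
  have "measurable (borel \<Otimes>\<^sub>M uniform_measure lborel {a..b}) = measurable (borel \<Otimes>\<^sub>M borel)"
    by (intro ext measurable_cong_sets sets_pair_measure_cong) auto
  then have "(\<lambda>(y, v). \<psi> (y + v)) \<in> borel_measurable (borel \<Otimes>\<^sub>M uniform_measure lborel {a..b})"
    by simp
  then show ?thesis by (intro borel_measurable_lebesgue_integral) simp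
qed

lemma ennreal_integral_uniform_conv:
  fixes \<psi> :: "real \<Rightarrow> real"
  assumes ab: "a < b" and l: "0 < l" and \<psi>[measurable]: "\<psi> \<in> borel_measurable borel"
    and \<psi>0: "\<And>x. 0 \<le> \<psi> x" and C: "\<And>x. \<psi> x \<le> C"
  shows "ennreal (\<integral>y. (\<integral>v. \<psi> (y+v) \<partial>uniform_measure lborel {a..b}) \<partial>uniform_measure lborel {c..c+l})
    = ennreal (1/l) * (ennreal (1/(b-a)) *
        (\<integral>\<^sup>+x. ennreal (\<psi> x) * (\<integral>\<^sup>+y. indicator {a..b} (x - y) * indicator {c..c+l} y \<partial>lborel) \<partial>lborel))"
proof -
  let ?Ua = "uniform_measure lborel {a..b}" and ?Uc = "uniform_measure lborel {c..c+l}"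
  define inner where "inner y = (\<integral>v. \<psi> (y+v) \<partial>?Ua)" for y
  interpret Ua: prob_space ?Ua using prob_space_uniform_Icc[OF ab] .
  have inner0: "0 \<le> inner y" for y
    unfolding inner_def by (intro integral_nonneg_AE) (auto simp: \<psi>0)
  have innerC: "inner y \<le> C" for y
  proof -
    have "0 \<le> C" using \<psi>0[of 0] C[of 0] by simp
    then have "inner y \<le> (\<integral>v. C \<partial>?Ua)" unfolding inner_def
      by (intro integral_mono integrable_bounded[where C=C] Ua.finite_measure_axioms)
        (auto simp: \<psi>0 C abs_of_nonneg)
    then show ?thesis using Ua.prob_space by simp
  qed
  have inner_m[measurable]: "inner \<in> borel_measurable borel"
    unfolding inner_def by (rule borel_measurable_integral_uniform_translate[OF ab \<psi>])
  note inner_nn = ennreal_integral_uniform_translate[OF ab \<psi> \<psi>0 C, folded inner_def]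
  have "ennreal (\<integral>y. inner y \<partial>?Uc) =
      ennreal (1/l) * (\<integral>\<^sup>+y. ennreal (inner y) * indicator {c..c+l} y \<partial>lborel)"
    using ennreal_integral_uniform_Icc[of c "c+l" inner C] l by (simp add: inner0 innerC)
  also have "(\<integral>\<^sup>+y. ennreal (inner y) * indicator {c..c+l} y \<partial>lborel) =
      (\<integral>\<^sup>+y. ennreal (1/(b-a)) *
        (\<integral>\<^sup>+x. ennreal (\<psi> x) * indicator {a..b} (x - y) * indicator {c..c+l} y \<partial>lborel) \<partial>lborel)"
  proof (intro nn_integral_cong)
    fix y
    have "(\<integral>\<^sup>+x. ennreal (\<psi> x) * indicator {a..b} (x - y) \<partial>lborel) * indicator {c..c+l} y =
      (\<integral>\<^sup>+x. ennreal (\<psi> x) * indicator {a..b} (x - y) * indicator {c..c+l} y \<partial>lborel)"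
      by (rule nn_integral_multc[symmetric]) measurable
    then show "ennreal (inner y) * indicator {c..c+l} y = ennreal (1/(b-a)) *
        (\<integral>\<^sup>+x. ennreal (\<psi> x) * indicator {a..b} (x - y) * indicator {c..c+l} y \<partial>lborel)"
      by (simp add: inner_nn mult.assoc)
  qed
  also have "\<dots> = ennreal (1/(b-a)) *
      (\<integral>\<^sup>+y. (\<integral>\<^sup>+x. ennreal (\<psi> x) * indicator {a..b} (x - y) * indicator {c..c+l} y \<partial>lborel) \<partial>lborel)"
    by (rule nn_integral_cmult) measurable
  also have "(\<integral>\<^sup>+y. (\<integral>\<^sup>+x. ennreal (\<psi> x) * indicator {a..b} (x - y) * indicator {c..c+l} y \<partial>lborel) \<partial>lborel)
      = (\<integral>\<^sup>+x. (\<integral>\<^sup>+y. ennreal (\<psi> x) * indicator {a..b} (x - y) * indicator {c..c+l} y \<partial>lborel) \<partial>lborel)"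
    by (rule lborel_pair.Fubini') measurable
  also have "\<dots> = (\<integral>\<^sup>+x. ennreal (\<psi> x) *
      (\<integral>\<^sup>+y. indicator {a..b} (x - y) * indicator {c..c+l} y \<partial>lborel) \<partial>lborel)"
    by (intro nn_integral_cong, subst nn_integral_cmult[symmetric]) (auto simp: mult.assoc)
  finally show ?thesis unfolding inner_def .
qed

lemma uniform_conv_ge:
  fixes \<psi> :: "real \<Rightarrow> real"
  assumes ab: "a < b" and l: "b - a \<le> l" and \<psi>[measurable]: "\<psi> \<in> borel_measurable borel"
    and \<psi>0: "\<And>x. 0 \<le> \<psi> x" and C: "\<And>x. \<psi> x \<le> C"
  shows "(1/4) * (\<integral>x. \<psi> x \<partial>uniform_measure lborel {c+a+(b-a)/4 .. c+l+b-(b-a)/4})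
    \<le> (\<integral>y. (\<integral>v. \<psi> (y+v) \<partial>uniform_measure lborel {a..b}) \<partial>uniform_measure lborel {c..c+l})"
proof -
  let ?Ua = "uniform_measure lborel {a..b}" and ?Uc = "uniform_measure lborel {c..c+l}"
  define w where "w = b - a"
  define p where "p = c+a+(b-a)/4"
  define q where "q = c+l+b-(b-a)/4"
  have w0: "w > 0" using ab by (simp add: w_def)
  have l0: "l > 0" using ab l by simp
  have qp: "q - p = l + w/2" by (simp add: p_def q_def w_def field_simps)
  have pq: "p < q" using qp l0 w0 by simp
  define Z where "Z = (\<integral>\<^sup>+x. ennreal (\<psi> x) * indicator {p..q} x \<partial>lborel)"
  have "ennreal ((1/4) * (\<integral>x. \<psi> x \<partial>uniform_measure lborel {p..q})) =
      ennreal (1/4) * (ennreal (1/(q-p)) * Z)"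
    unfolding Z_def
    by (subst ennreal_mult)
      (auto intro!: integral_nonneg_AE simp: \<psi>0 ennreal_integral_uniform_Icc[OF pq, where C=C] C)
  also have "\<dots> \<le> ennreal (1/4) * (ennreal (1/l) * Z)"
    using qp l0 w0 by (intro mult_left_mono mult_right_mono ennreal_leI) (auto simp: field_simps)
  also have "\<dots> = ennreal (1/l) * (ennreal (1/w) * (ennreal (w/4) * Z))"
  proof -
    have "ennreal (1/w) * ennreal (w/4) = ennreal (1/4)"
      using w0 by (simp flip: ennreal_mult)
    then show ?thesis by (metis mult.assoc mult.commute)
  qed
  also have "\<dots> \<le> ennreal (1/l) * (ennreal (1/w) *
      (\<integral>\<^sup>+x. ennreal (\<psi> x) * (\<integral>\<^sup>+y. indicator {a..b} (x - y) * indicator {c..c+l} y \<partial>lborel) \<partial>lborel))"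
  proof (intro mult_left_mono order_refl)
    have "ennreal (w/4) * Z = (\<integral>\<^sup>+x. ennreal (\<psi> x) * (ennreal (w/4) * indicator {p..q} x) \<partial>lborel)"
      unfolding Z_def
      by (subst nn_integral_cmult[symmetric]) (auto intro!: nn_integral_cong simp: mult_ac)
    also have "\<dots> \<le> (\<integral>\<^sup>+x. ennreal (\<psi> x) *
        (\<integral>\<^sup>+y. indicator {a..b} (x - y) * indicator {c..c+l} y \<partial>lborel) \<partial>lborel)"
    proof (intro nn_integral_mono mult_left_mono)
      fix x
      show "ennreal (w/4) * indicator {p..q} x \<le>
          (\<integral>\<^sup>+y. indicator {a..b} (x - y) * indicator {c..c+l} y \<partial>lborel)"
        using interval_overlap_ge[OF ab l, of c x] by (auto simp: indicator_def p_def q_def w_def)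
    qed auto
    finally show "ennreal (w/4) * Z \<le> \<dots>" .
  qed auto
  also have "\<dots> = ennreal (\<integral>y. (\<integral>v. \<psi> (y+v) \<partial>?Ua) \<partial>?Uc)"
    unfolding w_def by (rule ennreal_integral_uniform_conv[OF ab l0 \<psi> \<psi>0 C, symmetric])
  finally show ?thesis
    unfolding p_def q_def
    by (subst (asm) ennreal_le_iff) (auto intro!: integral_nonneg_AE simp: \<psi>0)
qed

lemma conv_at_uniform_shift_le:
  fixes F :: "(nat \<Rightarrow> real) \<Rightarrow> real"
  assumes F: "bdd_meas F" "\<And>s. 0 \<le> F s" and t: "0 \<le> t" "t + 1 \<le> L"
  shows "(1/L) * conv_at (uniform_measure lborel {c..c+1}) j (\<lambda>s'. F (s'(j := s' j + t))) s
      \<le> conv_at (uniform_measure lborel {c..c+L}) j F s"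
proof -
  let ?U1 = "uniform_measure lborel {c..c+1}" and ?UL = "uniform_measure lborel {c..c+L}"
  from F obtain C where C: "\<And>s. \<bar>F s\<bar> \<le> C" and Fm[measurable]: "F \<in> borel_measurable coords"
    unfolding bdd_meas_def by auto
  define \<psi> where "\<psi> x = F (s(j := s j + x))" for x
  have \<psi>m[measurable]: "\<psi> \<in> borel_measurable borel" unfolding \<psi>_def by measurable
  have \<psi>0: "0 \<le> \<psi> x" for x unfolding \<psi>_def using F by simp
  have \<psi>C: "\<psi> x \<le> C" for x unfolding \<psi>_def using C[of "s(j := s j + x)"] by simp
  have L0: "L > 0" using t by simp
  have l: "conv_at ?U1 j (\<lambda>s'. F (s'(j := s' j + t))) s = (\<integral>y. \<psi> (t + y) \<partial>?U1)"
    unfolding conv_at_def \<psi>_def by (simp add: ac_simps)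
  have r: "conv_at ?UL j F s = (\<integral>y. \<psi> y \<partial>?UL)"
    unfolding conv_at_def \<psi>_def ..
  have el: "ennreal (\<integral>y. \<psi> (t + y) \<partial>?U1) =
      ennreal (1/1) * (\<integral>\<^sup>+x. ennreal (\<psi> (t + x)) * indicator {c..c+1} x \<partial>lborel)"
    using ennreal_integral_uniform_Icc[of c "c+1" "\<lambda>y. \<psi> (t + y)" C] by (simp add: \<psi>0 \<psi>C)
  have er: "ennreal (\<integral>y. \<psi> y \<partial>?UL) =
      ennreal (1/L) * (\<integral>\<^sup>+x. ennreal (\<psi> x) * indicator {c..c+L} x \<partial>lborel)"
    using ennreal_integral_uniform_Icc[of c "c+L" "\<psi>" C] L0 by (simp add: \<psi>0 \<psi>C)
  have "(\<integral>\<^sup>+x. ennreal (\<psi> (t + x)) * indicator {c..c+1} x \<partial>lborel) =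
      (\<integral>\<^sup>+x. ennreal (\<psi> x) * indicator {c+t..c+t+1} x \<partial>lborel)"
    using nn_integral_real_affine[of "\<lambda>x. ennreal (\<psi> x) * indicator {c+t..c+t+1} x" 1 t]
    by (auto simp: indicator_def intro!: nn_integral_cong)
  also have "\<dots> \<le> (\<integral>\<^sup>+x. ennreal (\<psi> x) * indicator {c..c+L} x \<partial>lborel)"
    using t by (intro nn_integral_mono mult_left_mono) (auto simp: indicator_def)
  finally have "ennreal (1/L) * ennreal (\<integral>y. \<psi> (t + y) \<partial>?U1) \<le> ennreal (\<integral>y. \<psi> y \<partial>?UL)"
    unfolding el er by (auto intro!: mult_left_mono)
  then have "ennreal ((1/L) * (\<integral>y. \<psi> (t + y) \<partial>?U1)) \<le> ennreal (\<integral>y. \<psi> y \<partial>?UL)"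
    using L0 by (subst ennreal_mult) (auto intro!: integral_nonneg_AE simp: \<psi>0)
  then show ?thesis unfolding l r
    by (subst (asm) ennreal_le_iff) (auto intro!: integral_nonneg_AE simp: \<psi>0)
qed

lemma uniform_measure_Ioo_eq_Icc:
  fixes a b :: real
  assumes "a < b"
  shows "uniform_measure lborel {a<..<b} = uniform_measure lborel {a..b}"
proof -
  have e: "emeasure lborel {a<..<b} = emeasure lborel {a..b}" using assms by simp
  have "AE x in lborel. x \<noteq> a" "AE x in lborel. x \<noteq> b" by (rule AE_lborel_singleton)+
  then have "AE x in lborel.
      indicator {a<..<b} x / emeasure lborel {a<..<b} = (indicator {a..b} x / emeasure lborel {a..b} :: ennreal)"
    by eventually_elim (auto simp: e indicator_def)
  then show ?thesis unfolding uniform_measure_def by (intro density_cong) auto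
qed

section \<open>Diagonal means\<close>

definition diag_shift :: "nat \<Rightarrow> real \<Rightarrow> (nat \<Rightarrow> real) \<Rightarrow> nat \<Rightarrow> real" where
  "diag_shift j t s = (\<lambda>i. if i < j then s i + t else s i)"

definition diag_mean :: "nat \<Rightarrow> ((nat \<Rightarrow> real) \<Rightarrow> real) \<Rightarrow> real \<Rightarrow> bool" where
  "diag_mean m g A \<longleftrightarrow> (\<forall>s. (\<integral>t. g (diag_shift m t s) \<partial>uniform_measure lborel {0..1}) = A)"

lemma diag_shift_add_at:
  "diag_shift m t (s(i := s i + v)) = (diag_shift m t s)(i := diag_shift m t s i + v)"
  by (auto simp: diag_shift_def fun_eq_iff)

lemma measurable_diag_shift[measurable]:
  "(\<lambda>(t, s). diag_shift m t s) \<in> measurable (borel \<Otimes>\<^sub>M coords) coords"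
  unfolding diag_shift_def by (rule measurable_PiM_single') (auto simp: case_prod_beta')

lemma measurable_diag_shift_const:
  "(\<lambda>t. diag_shift m t s) \<in> measurable borel coords"
proof -
  have "(\<lambda>t. (t, s)) \<in> measurable borel (borel \<Otimes>\<^sub>M coords)" by measurable
  then show ?thesis using measurable_comp[OF _ measurable_diag_shift] by (simp add: comp_def)
qed

lemma diag_mean_conv_at:
  assumes "borel_prob \<nu>" "bdd_meas g" "diag_mean m g A" shows "diag_mean m (conv_at \<nu> i g) A"
  unfolding diag_mean_def
proof
  fix s
  let ?U = "uniform_measure lborel {0..1::real}"
  from assms obtain C where C: "\<And>s. \<bar>g s\<bar> \<le> C" and gm[measurable]: "g \<in> borel_measurable coords"
    unfolding bdd_meas_def by auto
  have "(\<integral>t. conv_at \<nu> i g (diag_shift m t s) \<partial>?U) =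
      (\<integral>t. \<integral>v. g (diag_shift m t (s(i := s i + v))) \<partial>\<nu> \<partial>?U)"
    unfolding conv_at_def diag_shift_add_at ..
  also have "\<dots> = (\<integral>v. \<integral>t. g (diag_shift m t (s(i := s i + v))) \<partial>?U \<partial>\<nu>)"
  proof (rule integral_swap_borel_prob[OF borel_prob_uniform_Icc assms(1), where C=C])
    have "(\<lambda>(t,v). (t, s(i := s i + v))) \<in> measurable (borel \<Otimes>\<^sub>M borel) (borel \<Otimes>\<^sub>M coords)"
      by measurable
    then show "(\<lambda>(u, v). g (diag_shift m u (s(i := s i + v)))) \<in> borel_measurable (borel \<Otimes>\<^sub>M borel)"
      using measurable_comp[OF _ measurable_comp[OF measurable_diag_shift gm]]
      by (simp add: comp_def case_prod_beta')
  qed (simp_all add: C)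
  also have "\<dots> = (\<integral>v. A \<partial>\<nu>)" using assms(3) unfolding diag_mean_def by simp
  also have "\<dots> = A" using assms(1) unfolding borel_prob_def by (simp add: prob_space.prob_space)
  finally show "(\<integral>t. conv_at \<nu> i g (diag_shift m t s) \<partial>?U) = A" .
qed

lemma diag_mean_conv_upto:
  "borel_prob \<nu> \<Longrightarrow> bdd_meas g \<Longrightarrow> diag_mean m g A \<Longrightarrow> diag_mean m (conv_upto \<nu> j g) A"
  by (induction j) (auto intro: diag_mean_conv_at bdd_meas_conv_upto)

lemma diag_mean_conv_at_pow:
  "borel_prob \<nu> \<Longrightarrow> bdd_meas g \<Longrightarrow> diag_mean m g A \<Longrightarrow> diag_mean m ((conv_at \<nu> i ^^ n) g) A"
  by (induction n) (auto intro: diag_mean_conv_at bdd_meas_conv_at_pow)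

lemma diag_mean_affine:
  assumes "bdd_meas g" "diag_mean m g A" shows "diag_mean m (\<lambda>s. \<alpha> * g s + \<beta>) (\<alpha> * A + \<beta>)"
  unfolding diag_mean_def
proof
  fix s
  let ?U = "uniform_measure lborel {0..1::real}"
  interpret U: prob_space ?U by (rule prob_space_uniform_Icc) simp
  obtain C where C: "\<And>s. \<bar>g s\<bar> \<le> C" and gm[measurable]: "g \<in> borel_measurable coords"
    using assms unfolding bdd_meas_def by auto
  have int: "integrable ?U (\<lambda>t. g (diag_shift m t s))"
    by (intro integrable_bounded[where C=C] U.finite_measure_axioms)
      (auto simp: C intro: measurable_compose[OF measurable_diag_shift_const])
  have "(\<integral>t. \<alpha> * g (diag_shift m t s) + \<beta> \<partial>?U) = \<alpha> * (\<integral>t. g (diag_shift m t s) \<partial>?U) + \<beta>"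
    using int by (simp add: U.prob_space)
  then show "(\<integral>t. \<alpha> * g (diag_shift m t s) + \<beta> \<partial>?U) = \<alpha> * A + \<beta>"
    using assms(2) unfolding diag_mean_def by simp
qed

lemma conv_upto_uniform_shift_le:
  assumes g: "bdd_meas g" "\<And>s. 0 \<le> g s" and t: "0 \<le> t" "t \<le> 1" and L: "2 \<le> L"
  shows "(1/L)^j * conv_upto (uniform_measure lborel {c..c+1}) j (\<lambda>s. g (diag_shift j t s)) s
    \<le> conv_upto (uniform_measure lborel {c..c+L}) j g s"
proof (induction j arbitrary: s)
  case 0 then show ?case by (simp add: diag_shift_def)
next
  case (Suc j)
  let ?l = "uniform_measure lborel {c..c+1}" and ?L = "uniform_measure lborel {c..c+L}"
  have fl: "borel_prob ?l" by (rule borel_prob_uniform_Icc) simp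
  have fL: "borel_prob ?L" by (rule borel_prob_uniform_Icc) (use L in simp)
  have L0: "0 < L" using L by simp
  have gs: "bdd_meas (\<lambda>s. g (diag_shift j t s))"
  proof -
    have "(\<lambda>s. diag_shift j t s) \<in> measurable coords coords"
      unfolding diag_shift_def by (rule measurable_PiM_single') auto
    then show ?thesis using g unfolding bdd_meas_def by (auto intro: measurable_compose)
  qed
  define \<sigma> where "\<sigma> s' = s'(j := s' j + t)" for s' :: "nat \<Rightarrow> real"
  have "(1/L)^(Suc j) * conv_upto ?l (Suc j) (\<lambda>s. g (diag_shift (Suc j) t s)) s
      = (1/L) * conv_at ?l j (\<lambda>s'. (1/L)^j * conv_upto ?l j (\<lambda>s. g (diag_shift j t s)) (\<sigma> s')) s"
  proof -
    have e: "diag_shift j t (\<sigma> s') = diag_shift (Suc j) t s'" for s'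
      unfolding diag_shift_def \<sigma>_def by (auto simp: fun_eq_iff less_Suc_eq)
    have cm: "\<sigma> (s(i := s i + v)) = (\<sigma> s)(i := \<sigma> s i + v)" if "i < j" for i s v
      using that unfolding \<sigma>_def by (auto simp: fun_eq_iff)
    have "conv_upto ?l j (\<lambda>s. g (diag_shift (Suc j) t s))
        = (\<lambda>s'. conv_upto ?l j (\<lambda>s. g (diag_shift j t s)) (\<sigma> s'))"
      using conv_upto_equivariant[of j \<sigma> ?l "\<lambda>s. g (diag_shift j t s)", OF cm]
      by (simp add: e fun_eq_iff)
    then show ?thesis by (simp add: conv_at_cmult)
  qed
  also have "\<dots> \<le> (1/L) * conv_at ?l j (\<lambda>s'. conv_upto ?L j g (\<sigma> s')) s"
    unfolding \<sigma>_def using L0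
    by (intro mult_left_mono conv_at_mono fl bdd_meas_add_at bdd_meas_cmult bdd_meas_conv_upto gs fL g
        Suc.IH) auto
  also have "\<dots> \<le> conv_at ?L j (conv_upto ?L j g) s"
    unfolding \<sigma>_def using L t
    by (intro conv_at_uniform_shift_le bdd_meas_conv_upto conv_upto_nonneg fL g) auto
  finally show ?case by simp
qed

lemma conv_upto_ge_diag_mean:
  assumes g: "bdd_meas g" "\<And>s. 0 \<le> g s" "diag_mean m g A" and L: "2 \<le> L"
  shows "(1/L)^m * A \<le> conv_upto (uniform_measure lborel {c..c+L}) m g s"
proof -
  let ?U = "uniform_measure lborel {0..1::real}"
  let ?l = "uniform_measure lborel {c..c+1}" and ?L = "uniform_measure lborel {c..c+L}"
  have fl: "borel_prob ?l" by (rule borel_prob_uniform_Icc) simp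
  interpret U: prob_space ?U by (rule prob_space_uniform_Icc) simp
  have pt: "(1/L)^m * conv_upto ?l m g (diag_shift m t s) \<le> conv_upto ?L m g s"
    if "0 \<le> t" "t \<le> 1" for t
  proof -
    have "conv_upto ?l m (\<lambda>s. g (diag_shift m t s)) s = conv_upto ?l m g (diag_shift m t s)"
      by (rule conv_upto_equivariant) (auto simp: diag_shift_def fun_eq_iff)
    then show ?thesis
      using conv_upto_uniform_shift_le[OF g(1,2) that L, where c=c and j=m and s=s] by simp
  qed
  obtain C where C: "\<And>s. \<bar>conv_upto ?l m g s\<bar> \<le> C"
    and cm[measurable]: "conv_upto ?l m g \<in> borel_measurable coords"
    using bdd_meas_conv_upto[OF fl g(1), of m] unfolding bdd_meas_def by auto
  have int: "integrable ?U (\<lambda>t. (1/L)^m * conv_upto ?l m g (diag_shift m t s))"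
    by (intro integrable_mult_right integrable_bounded[where C=C] U.finite_measure_axioms)
       (auto simp: C intro: measurable_compose[OF measurable_diag_shift_const])
  have "(1/L)^m * A = (\<integral>t. (1/L)^m * conv_upto ?l m g (diag_shift m t s) \<partial>?U)"
    using diag_mean_conv_upto[OF fl g(1) g(3), of m] unfolding diag_mean_def by simp
  also have "\<dots> \<le> (\<integral>t. conv_upto ?L m g s \<partial>?U)"
    by (intro integral_mono_AE int) (auto simp: AE_uniform_measure pt)
  also have "\<dots> = conv_upto ?L m g s" by (simp add: U.prob_space)
  finally show ?thesis .
qed

section \<open>Doeblin bound for rounds of uniform kicks\<close>

locale uniform_kicks =
  fixes a b :: real
  assumes ab: "a < b"
begin

abbreviation Uab :: "real measure" where
  "Uab \<equiv> uniform_measure lborel {a..b}"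

lemma borel_prob_Uab: "borel_prob Uab"
  by (rule borel_prob_uniform_Icc) (rule ab)

lemma conv_at_uniform_spread:
  assumes F: "bdd_meas F" "\<And>s. 0 \<le> F s" and l: "b - a \<le> l"
    and p: "p = c+a+(b-a)/4" and q: "q = c+l+b-(b-a)/4"
  shows "(1/4) * conv_at (uniform_measure lborel {p..q}) j F s
    \<le> conv_at (uniform_measure lborel {c..c+l}) j (conv_at Uab j F) s"
proof -
  from F obtain C where C: "\<And>s. \<bar>F s\<bar> \<le> C" and Fm[measurable]: "F \<in> borel_measurable coords"
    unfolding bdd_meas_def by auto
  define \<psi> where "\<psi> x = F (s(j := s j + x))" for x
  have \<psi>m[measurable]: "\<psi> \<in> borel_measurable borel" unfolding \<psi>_def by measurable
  have \<psi>0: "0 \<le> \<psi> x" for x unfolding \<psi>_def using F by simp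
  have \<psi>C: "\<psi> x \<le> C" for x unfolding \<psi>_def using C[of "s(j := s j + x)"] by simp
  have "conv_at (uniform_measure lborel {c..c+l}) j (conv_at Uab j F) s =
     (\<integral>y. (\<integral>v. \<psi> (y+v) \<partial>Uab) \<partial>uniform_measure lborel {c..c+l})"
    unfolding conv_at_def \<psi>_def by (simp add: ac_simps)
  moreover have "conv_at (uniform_measure lborel {p..q}) j F s = (\<integral>x. \<psi> x \<partial>uniform_measure lborel {p..q})"
    unfolding conv_at_def \<psi>_def ..
  ultimately show ?thesis using uniform_conv_ge[OF ab l \<psi>m \<psi>0 \<psi>C, of c] p q by simp
qed

text \<open>Adding a kick to a variable uniform on an interval of length \<open>l \<ge> b - a\<close> gives a
  density of at least \<open>1/(4l)\<close> on the sum interval with \<open>(b - a)/4\<close> cut off at both ends;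
  \<open>spread k\<close> is the interval reached after \<open>k + 1\<close> kicks.\<close>

definition spread_start :: "nat \<Rightarrow> real" where
  "spread_start k = a + real k * (a + (b-a)/4)"

definition spread_len :: "nat \<Rightarrow> real" where
  "spread_len k = (b - a) + real k * ((b-a)/2)"

abbreviation spread :: "nat \<Rightarrow> real measure" where
  "spread k \<equiv> uniform_measure lborel {spread_start k..spread_start k + spread_len k}"

lemma spread_len_pos: "0 < spread_len k"
  using ab unfolding spread_len_def by (simp add: add_pos_nonneg)

lemma spread_len_unbounded: "\<exists>k. L \<le> spread_len k"
proof
  define k where "k = nat \<lceil>2 * L / (b - a)\<rceil>"
  have "2 * L / (b - a) \<le> real k" unfolding k_def by linarith
  then have "L \<le> real k * ((b - a) / 2)" using ab by (simp add: field_simps)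
  then show "L \<le> spread_len k" unfolding spread_len_def using ab by simp
qed

lemma conv_at_pow_ge_spread:
  assumes "bdd_meas F" "\<And>s. 0 \<le> F s"
  shows "(1/4)^k * conv_at (spread k) j F s \<le> (conv_at Uab j ^^ Suc k) F s"
  using assms
proof (induction k arbitrary: F s)
  case 0
  then show ?case by (simp add: spread_start_def spread_len_def)
next
  case (Suc k)
  have "(1/4) * conv_at (spread (Suc k)) j F s \<le> conv_at (spread k) j (conv_at Uab j F) s"
    by (rule conv_at_uniform_spread[OF Suc.prems])
      (use ab in \<open>auto simp: spread_start_def spread_len_def field_simps intro: mult_right_mono\<close>)
  then have "(1/4)^Suc k * conv_at (spread (Suc k)) j F s
      \<le> (1/4)^k * conv_at (spread k) j (conv_at Uab j F) s"
    by (simp add: mult.assoc mult_left_mono)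
  also have "\<dots> \<le> (conv_at Uab j ^^ Suc k) (conv_at Uab j F) s"
    by (rule Suc.IH) (auto intro: bdd_meas_conv_at conv_at_nonneg borel_prob_Uab Suc.prems)
  also have "\<dots> = (conv_at Uab j ^^ Suc (Suc k)) F s"
    by (simp only: funpow_Suc_right comp_def)
  finally show ?case .
qed

primrec block_conv :: "nat \<Rightarrow> nat \<Rightarrow> ((nat \<Rightarrow> real) \<Rightarrow> real) \<Rightarrow> (nat \<Rightarrow> real) \<Rightarrow> real" where
  "block_conv K 0 g = g"
| "block_conv K (Suc j) g = (conv_at Uab j ^^ K) (block_conv K j g)"

lemma bdd_meas_block_conv: "bdd_meas g \<Longrightarrow> bdd_meas (block_conv K j g)"
  by (induction j) (auto intro: bdd_meas_conv_at_pow borel_prob_Uab)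

lemma diag_mean_block_conv: "bdd_meas g \<Longrightarrow> diag_mean m g A \<Longrightarrow> diag_mean m (block_conv K j g) A"
  by (induction j) (auto intro: diag_mean_conv_at_pow borel_prob_Uab bdd_meas_block_conv)

lemma block_conv_affine:
  "bdd_meas g \<Longrightarrow> block_conv K j (\<lambda>s. \<alpha> * g s + \<beta>) s = \<alpha> * block_conv K j g s + \<beta>"
proof (induction j arbitrary: s)
  case (Suc j)
  have "block_conv K j (\<lambda>s. \<alpha> * g s + \<beta>) = (\<lambda>s. \<alpha> * block_conv K j g s + \<beta>)"
    by (rule ext) (rule Suc.IH[OF Suc.prems])
  then show ?case
    using Suc.prems by (simp add: conv_at_pow_affine borel_prob_Uab bdd_meas_block_conv)
qed simp

lemma block_conv_bounds:
  "bdd_meas g \<Longrightarrow> (\<And>s. lo \<le> g s \<and> g s \<le> hi) \<Longrightarrow> lo \<le> block_conv K j g s \<and> block_conv K j g s \<le> hi"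
  by (induction j arbitrary: s)
    (auto intro!: conv_at_pow_bounds[THEN conjunct1] conv_at_pow_bounds[THEN conjunct2]
      borel_prob_Uab bdd_meas_block_conv)

lemma block_conv_ge_conv_upto:
  assumes "bdd_meas g" "\<And>s. 0 \<le> g s"
  shows "((1/4)^k)^j * conv_upto (spread k) j g s \<le> block_conv (Suc k) j g s"
proof (induction j arbitrary: s)
  case 0 then show ?case by simp
next
  case (Suc j)
  have fL: "borel_prob (spread k)"
    by (rule borel_prob_uniform_Icc) (simp add: spread_len_pos)
  have "((1/4)^k)^Suc j * conv_upto (spread k) (Suc j) g s
      = ((1/4)^k)^j * ((1/4)^k * conv_at (spread k) j (conv_upto (spread k) j g) s)"
    by simp
  also have "\<dots> \<le> ((1/4)^k)^j * (conv_at Uab j ^^ Suc k) (conv_upto (spread k) j g) s"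
    by (intro mult_left_mono conv_at_pow_ge_spread bdd_meas_conv_upto conv_upto_nonneg fL assms) auto
  also have "\<dots> = (conv_at Uab j ^^ Suc k) (\<lambda>s. ((1/4)^k)^j * conv_upto (spread k) j g s + 0) s"
    using conv_at_pow_affine[OF borel_prob_Uab bdd_meas_conv_upto[OF fL assms(1), of j],
        where i=j and n="Suc k" and \<alpha>="((1/4)^k)^j" and \<beta>=0 and s=s]
    by simp
  also have "\<dots> \<le> (conv_at Uab j ^^ Suc k) (block_conv (Suc k) j g) s"
    by (intro conv_at_pow_mono borel_prob_Uab bdd_meas_add bdd_meas_cmult bdd_meas_conv_upto fL assms
        bdd_meas_block_conv bdd_meas_const) (simp add: Suc.IH)
  finally show ?case by simp
qed

definition doeblin_const :: "nat \<Rightarrow> nat \<Rightarrow> real" where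
  "doeblin_const m k = ((1/4)^k)^m * (1/spread_len k)^m"

lemma doeblin_const_pos: "0 < doeblin_const m k"
  using spread_len_pos unfolding doeblin_const_def by simp

lemma doeblin_const_le_1:
  assumes "1 \<le> spread_len k" shows "doeblin_const m k \<le> 1"
proof -
  have "((1/4::real)^k)^m \<le> 1" by (simp add: power_le_one)
  moreover have "(1 / spread_len k)^m \<le> 1" using assms by (intro power_le_one) auto
  ultimately show ?thesis unfolding doeblin_const_def using assms by (intro mult_le_one) auto
qed

lemma block_conv_ge_doeblin:
  assumes L: "2 \<le> spread_len k" and g: "bdd_meas g" "\<And>s. 0 \<le> g s" "diag_mean m g A"
  shows "doeblin_const m k * A \<le> block_conv (Suc k) m g s"
proof -
  have "(1/spread_len k)^m * A \<le> conv_upto (spread k) m g s"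
    by (rule conv_upto_ge_diag_mean[OF g L])
  then have "((1/4)^k)^m * ((1/spread_len k)^m * A) \<le> ((1/4)^k)^m * conv_upto (spread k) m g s"
    by (intro mult_left_mono) auto
  also have "\<dots> \<le> block_conv (Suc k) m g s" by (rule block_conv_ge_conv_upto[OF g(1,2)])
  finally show ?thesis by (simp add: doeblin_const_def mult.assoc)
qed

lemma block_conv_contract:
  assumes L: "2 \<le> spread_len k"
    and g: "bdd_meas g" "diag_mean m g d" "\<And>s. lo \<le> g s \<and> g s \<le> hi"
  shows "lo + doeblin_const m k * (d - lo) \<le> block_conv (Suc k) m g s
    \<and> block_conv (Suc k) m g s \<le> hi - doeblin_const m k * (hi - d)"
proof
  have g1: "bdd_meas (\<lambda>s. 1 * g s + (-lo))" by (intro bdd_meas_add bdd_meas_cmult g) simp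
  have "doeblin_const m k * (1 * d + (-lo)) \<le> block_conv (Suc k) m (\<lambda>s. 1 * g s + (-lo)) s"
    by (rule block_conv_ge_doeblin[OF L g1 _ diag_mean_affine[OF g(1,2)]])
      (simp add: g(3)[THEN conjunct1])
  then show "lo + doeblin_const m k * (d - lo) \<le> block_conv (Suc k) m g s"
    using block_conv_affine[OF g(1), of "Suc k" m 1 "-lo" s] by simp
  have g2: "bdd_meas (\<lambda>s. (-1) * g s + hi)" by (intro bdd_meas_add bdd_meas_cmult g) simp
  have "doeblin_const m k * ((-1) * d + hi) \<le> block_conv (Suc k) m (\<lambda>s. (-1) * g s + hi) s"
    by (rule block_conv_ge_doeblin[OF L g2 _ diag_mean_affine[OF g(1,2)]])
      (simp add: g(3)[THEN conjunct2])
  then show "block_conv (Suc k) m g s \<le> hi - doeblin_const m k * (hi - d)"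
    using block_conv_affine[OF g(1), of "Suc k" m "-1" hi s] by simp
qed

lemma bdd_meas_block_conv_iter: "bdd_meas g \<Longrightarrow> bdd_meas ((block_conv K m ^^ j) g)"
  by (induction j) (auto intro: bdd_meas_block_conv)

lemma diag_mean_block_conv_iter:
  "bdd_meas g \<Longrightarrow> diag_mean m g d \<Longrightarrow> diag_mean m ((block_conv K m ^^ j) g) d"
  by (induction j) (auto intro: diag_mean_block_conv bdd_meas_block_conv_iter)

lemma block_conv_iter_bounds:
  assumes L: "2 \<le> spread_len k"
    and g: "bdd_meas g" "diag_mean m g d" "\<And>s. lo \<le> g s \<and> g s \<le> hi"
  shows "d - (1 - doeblin_const m k)^j * (d - lo) \<le> (block_conv (Suc k) m ^^ j) g s
    \<and> (block_conv (Suc k) m ^^ j) g s \<le> d + (1 - doeblin_const m k)^j * (hi - d)"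
proof (induction j arbitrary: s)
  case 0 then show ?case using g(3)[of s] by simp
next
  case (Suc j)
  let ?q = "doeblin_const m k" and ?W = "(block_conv (Suc k) m ^^ j) g"
  let ?lo = "d - (1 - ?q)^j * (d - lo)" and ?hi = "d + (1 - ?q)^j * (hi - d)"
  have "?lo + ?q * (d - ?lo) \<le> block_conv (Suc k) m ?W s \<and> block_conv (Suc k) m ?W s \<le> ?hi - ?q * (?hi - d)"
    by (rule block_conv_contract[OF L bdd_meas_block_conv_iter diag_mean_block_conv_iter])
      (use g Suc.IH in auto)
  then show ?case by (simp add: algebra_simps)
qed

end

section \<open>Fractional parts and significands\<close>

lemma borel_measurable_frac[measurable]: "(frac :: real \<Rightarrow> real) \<in> borel_measurable borel"
proof -
  have "(\<lambda>x::real. x - real_of_int \<lfloor>x\<rfloor>) \<in> borel_measurable borel" by measurable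
  then show ?thesis unfolding frac_def[abs_def] .
qed

lemma frac_add_unit:
  fixes x t :: real assumes "0 \<le> t" "t \<le> 1"
  shows "frac (x + t) = (if frac x + t < 1 then frac x + t else frac x + t - 1)"
proof -
  have f: "0 \<le> frac x" "frac x < 1" by (auto simp: frac_lt_1)
  have x: "x = of_int \<lfloor>x\<rfloor> + frac x" by (simp add: frac_def)
  show ?thesis
  proof (cases "frac x + t < 1")
    case True
    then have "\<lfloor>x + t\<rfloor> = \<lfloor>x\<rfloor>" using f assms by (subst x, subst floor_unique) auto
    then show ?thesis using True by (simp add: frac_def)
  next
    case False
    then have "\<lfloor>x + t\<rfloor> = \<lfloor>x\<rfloor> + 1" using f assms by (subst x, subst floor_unique) auto
    then show ?thesis using False by (simp add: frac_def)
  qed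
qed

lemma integral_frac_add_le:
  fixes x d :: real assumes d: "0 \<le> d" "d \<le> 1"
  shows "(\<integral>t. (if frac (x + t) \<le> d then 1 else 0) \<partial>uniform_measure lborel {0..1}) = d"
proof -
  let ?U = "uniform_measure lborel {0..1::real}"
  define S where "S = {t::real. frac (x + t) \<le> d}"
  define f where "f = frac x"
  have f: "0 \<le> f" "f < 1" by (auto simp: f_def frac_lt_1)
  have Sm: "S \<in> sets borel" unfolding S_def by measurable
  have "(\<integral>t. (if frac (x + t) \<le> d then 1 else 0) \<partial>?U) = (\<integral>t. indicator S t \<partial>?U)"
    by (intro Bochner_Integration.integral_cong) (auto simp: S_def indicator_def)
  also have "\<dots> = measure ?U S"
    by simp
  also have "\<dots> = measure lborel ({0..1} \<inter> S)"
    using Sm by (simp add: measure_def emeasure_uniform_measure divide_ennreal_def)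
  also have "\<dots> = d"
  proof (cases "f \<le> d")
    case True
    have e: "{0..1} \<inter> S = {0..1} - {d-f<..<1-f}"
      using True f d by (auto simp: S_def frac_add_unit f_def[symmetric])
    have "measure lborel ({0..1} - {d-f<..<1-f}) =
        measure lborel {0..1::real} - measure lborel {d-f<..<1-f}"
      using True f d by (intro measure_Diff) auto
    then show ?thesis unfolding e using True f d by simp
  next
    case False
    have e: "{0..1} \<inter> S = {1-f..1-f+d}"
      using False f d unfolding f_def by (auto simp: S_def frac_add_unit split: if_splits)
    show ?thesis unfolding e using d by simp
  qed
  finally show ?thesis .
qed

lemma significand_powr:
  assumes B: "1 < B"
  shows "significand B (B powr x) = B powr frac x"
  unfolding significand_def
proof (rule the_equality)
  have f: "0 \<le> frac x" "frac x < 1" by (auto simp: frac_lt_1)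
  show "1 \<le> B powr frac x \<and> B powr frac x < B \<and> log B (B powr x) - log B (B powr frac x) \<in> \<int>"
  proof (intro conjI)
    show "1 \<le> B powr frac x" using B f by (simp add: ge_one_powr_ge_zero)
    have "B powr frac x < B powr 1" using B f by (intro powr_less_mono) auto
    then show "B powr frac x < B" using B by simp
    show "log B (B powr x) - log B (B powr frac x) \<in> \<int>"
      using B frac_unique_iff[of x "frac x"] by simp
  qed
next
  fix s assume s: "1 \<le> s \<and> s < B \<and> log B (B powr x) - log B s \<in> \<int>"
  then have "0 \<le> log B s" "log B s < 1" using B by (auto simp: less_log_iff)
  then have "frac x = log B s" using s B by (simp add: frac_unique_iff)
  then show "s = B powr frac x" using s B by simp
qed

lemma significand_powr_le_iff:
  "1 < B \<Longrightarrow> 0 < D \<Longrightarrow> significand B (B powr x) \<le> D \<longleftrightarrow> frac x \<le> log B D"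
  by (simp add: significand_powr le_log_iff)

section \<open>Log-uniform fragmentation\<close>

locale log_uniform_cuts = uniform_kicks a b + prob_space M for a b and M :: "'a measure" +
  fixes m :: nat and B :: real and P :: "nat \<Rightarrow> nat \<Rightarrow> 'a \<Rightarrow> real"
  assumes B_gt_1: "1 < B"
    and P_pos: "\<And>i n \<omega>. i < m \<Longrightarrow> 1 \<le> n \<Longrightarrow> \<omega> \<in> space M \<Longrightarrow> 0 < P i n \<omega>"
    and P_measurable: "\<And>i n. i < m \<Longrightarrow> 1 \<le> n \<Longrightarrow> P i n \<in> borel_measurable M"
    and P_indep: "indep_vars (\<lambda>_. borel) (\<lambda>(i, n). P i n) ({0..<m} \<times> {1..})"
    and P_distr: "\<And>i n. i < m \<Longrightarrow> 1 \<le> n \<Longrightarrow>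
      distr M lborel (\<lambda>\<omega>. log B (P i n \<omega>)) = uniform_measure lborel {a<..<b}"
begin

abbreviation Idx :: "(nat \<times> nat) set" where
  "Idx \<equiv> {0..<m} \<times> {1..}"

definition log_cut :: "nat \<times> nat \<Rightarrow> 'a \<Rightarrow> real" where
  "log_cut q \<omega> = log B (P (fst q) (snd q) \<omega>)"

definition cut_sum :: "(nat \<times> nat) set \<Rightarrow> 'a \<Rightarrow> nat \<Rightarrow> real" where
  "cut_sum S \<omega> = (\<lambda>i. \<Sum>q\<in>S. if fst q = i then log_cut q \<omega> else 0)"

abbreviation log_walk :: "nat \<Rightarrow> 'a \<Rightarrow> nat \<Rightarrow> real" where
  "log_walk n \<equiv> cut_sum ({0..<m} \<times> {1..n})"

lemma log_cut_measurable[measurable]: "q \<in> Idx \<Longrightarrow> log_cut q \<in> borel_measurable M"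
  unfolding log_cut_def using P_measurable[of "fst q" "snd q"] by (cases q) auto

lemma cut_sum_measurable: "S \<subseteq> Idx \<Longrightarrow> cut_sum S \<in> measurable M coords"
  unfolding cut_sum_def
  by (rule measurable_PiM_single') (auto intro!: borel_measurable_sum log_cut_measurable)

lemma distr_log_cut: "q \<in> Idx \<Longrightarrow> distr M borel (log_cut q) = Uab"
proof -
  assume q: "q \<in> Idx"
  have "distr M borel (log_cut q) = distr M lborel (log_cut q)" unfolding distr_def by simp
  also have "\<dots> = uniform_measure lborel {a<..<b}"
    unfolding log_cut_def using P_distr[of "fst q" "snd q"] q by (cases q) auto
  also have "\<dots> = Uab" by (rule uniform_measure_Ioo_eq_Icc[OF ab])
  finally show ?thesis .
qed

lemma indep_vars_log_cut: "indep_vars (\<lambda>_. borel) log_cut Idx"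
proof -
  have "indep_vars (\<lambda>_. borel) (\<lambda>q x. log B ((case q of (i, n) \<Rightarrow> P i n) x)) Idx"
    by (rule indep_vars_compose2[OF P_indep]) auto
  then show ?thesis unfolding log_cut_def by (simp add: case_prod_beta')
qed

text \<open>The single cut is embedded as a constant vector, so that both variables live in
  \<open>coords\<close>.\<close>

lemma indep_var_cut_sum_log_cut:
  assumes S: "S \<subseteq> Idx" "finite S" and p: "p \<in> Idx" "p \<notin> S"
  shows "indep_var coords (cut_sum S) coords (\<lambda>\<omega> i. log_cut p \<omega>)"
proof -
  define K where "K = case_bool S {p}"
  define R where "R T \<omega> = restrict (\<lambda>q. log_cut q \<omega>) T" for T \<omega>
  define sum_at where "sum_at x i = (\<Sum>q\<in>S. if fst q = i then x q else 0)" for x :: "nat \<times> nat \<Rightarrow> real" and i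
  have I: "indep_vars (\<lambda>j. PiM (K j) (\<lambda>_. borel)) (\<lambda>j. R (K j)) UNIV"
    unfolding R_def
    by (rule indep_vars_restrict[OF indep_vars_log_cut])
      (use S p in \<open>auto simp: K_def disjoint_family_on_def split: bool.splits\<close>)
  have e1: "(\<lambda>j. PiM (K j) (\<lambda>_. borel)) = case_bool (PiM S (\<lambda>_. borel)) (PiM {p} (\<lambda>_. borel))"
    and e2: "(\<lambda>j. R (K j)) = case_bool (R S) (R {p})"
    by (auto simp: K_def fun_eq_iff split: bool.split)
  have "indep_var (PiM S (\<lambda>_. borel)) (R S) (PiM {p} (\<lambda>_. borel)) (R {p})"
    unfolding indep_var_def using I by (simp only: e1 e2)
  then have "indep_var coords (sum_at \<circ> R S) coords ((\<lambda>x i. x p) \<circ> R {p})"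
    by (rule indep_var_compose) (auto simp: sum_at_def intro!: measurable_PiM_single' borel_measurable_sum)
  moreover have "cut_sum S = sum_at \<circ> R S" "(\<lambda>\<omega> i. log_cut p \<omega>) = (\<lambda>x i. x p) \<circ> R {p}"
    unfolding cut_sum_def sum_at_def R_def by (auto simp: fun_eq_iff intro!: sum.cong)
  ultimately show ?thesis by (metis (no_types))
qed

lemma cut_sum_insert:
  "finite S \<Longrightarrow> p \<notin> S \<Longrightarrow>
    cut_sum (insert p S) \<omega> = (cut_sum S \<omega>)(fst p := cut_sum S \<omega> (fst p) + log_cut p \<omega>)"
  unfolding cut_sum_def by (auto simp: fun_eq_iff)

lemma integral_add_log_cut:
  assumes p: "p \<in> Idx" and g: "bdd_meas g"
  shows "(\<integral>\<omega>. g (z(i := z i + log_cut p \<omega>)) \<partial>M) = conv_at Uab i g z"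
proof -
  have [measurable]: "g \<in> borel_measurable coords" using g unfolding bdd_meas_def by auto
  have [measurable]: "log_cut p \<in> borel_measurable M" by (rule log_cut_measurable[OF p])
  have "(\<integral>\<omega>. g (z(i := z i + log_cut p \<omega>)) \<partial>M) = (\<integral>x. g (z(i := z i + x)) \<partial>distr M borel (log_cut p))"
    by (rule integral_distr[symmetric]) auto
  then show ?thesis unfolding conv_at_def distr_log_cut[OF p] .
qed

lemma integral_cut_sum_insert:
  assumes S: "S \<subseteq> Idx" "finite S" and p: "p \<in> Idx" "p \<notin> S" and g: "bdd_meas g"
  shows "(\<integral>\<omega>. g (cut_sum (insert p S) \<omega>) \<partial>M) = (\<integral>\<omega>. conv_at Uab (fst p) g (cut_sum S \<omega>) \<partial>M)"
proof -
  define i where "i = fst p"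
  obtain C where C: "\<And>s. \<bar>g s\<bar> \<le> C" and gm[measurable]: "g \<in> borel_measurable coords"
    using g unfolding bdd_meas_def by auto
  have [measurable]: "cut_sum S \<in> measurable M coords" by (rule cut_sum_measurable[OF S(1)])
  have [measurable]: "log_cut p \<in> borel_measurable M" by (rule log_cut_measurable[OF p(1)])
  have [measurable]: "(\<lambda>\<omega> (j::nat). log_cut p \<omega>) \<in> measurable M coords"
    by (rule measurable_PiM_single') auto
  let ?Z = "distr M coords (cut_sum S)" and ?V = "distr M coords (\<lambda>\<omega> j. log_cut p \<omega>)"
  define g' where "g' = (\<lambda>(z::nat\<Rightarrow>real, v::nat\<Rightarrow>real). g (z(i := z i + v 0)))"
  have g'm[measurable]: "g' \<in> borel_measurable (coords \<Otimes>\<^sub>M coords)"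
  proof -
    have "(\<lambda>x::(nat\<Rightarrow>real)\<times>(nat\<Rightarrow>real). (fst x)(i := fst x i + snd x 0))
        \<in> measurable (coords \<Otimes>\<^sub>M coords) coords"
      by measurable
    then show ?thesis unfolding g'_def by (simp add: case_prod_beta')
  qed
  have g'C: "\<bar>g' x\<bar> \<le> C" for x unfolding g'_def by (auto simp: C split: prod.split)
  interpret Z: prob_space ?Z by (rule prob_space_distr) simp
  interpret V: prob_space ?V by (rule prob_space_distr) simp
  interpret ZV: pair_prob_space ?Z ?V by unfold_locales
  have "(\<integral>\<omega>. g (cut_sum (insert p S) \<omega>) \<partial>M) = (\<integral>\<omega>. g' (cut_sum S \<omega>, \<lambda>j. log_cut p \<omega>) \<partial>M)"
    by (simp add: cut_sum_insert[OF S(2) p(2)] g'_def i_def)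
  also have "\<dots> = (\<integral>x. g' x \<partial>distr M (coords \<Otimes>\<^sub>M coords) (\<lambda>\<omega>. (cut_sum S \<omega>, \<lambda>j. log_cut p \<omega>)))"
    by (rule integral_distr[symmetric]) auto
  also have "\<dots> = (\<integral>x. g' x \<partial>(?Z \<Otimes>\<^sub>M ?V))"
    using indep_var_cut_sum_log_cut[OF S p] unfolding indep_var_distribution_eq by simp
  also have "\<dots> = (\<integral>z. \<integral>v. g' (z, v) \<partial>?V \<partial>?Z)"
    by (rule ZV.integral_fst'[symmetric], intro integrable_bounded[where C=C] ZV.finite_measure_axioms)
      (auto simp: g'C)
  also have "\<dots> = (\<integral>z. conv_at Uab i g z \<partial>?Z)"
  proof (intro Bochner_Integration.integral_cong refl)
    fix z
    show "(\<integral>v. g' (z, v) \<partial>?V) = conv_at Uab i g z"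
      unfolding g'_def by (subst integral_distr) (auto simp: integral_add_log_cut[OF p(1) g])
  qed
  also have "\<dots> = (\<integral>\<omega>. conv_at Uab i g (cut_sum S \<omega>) \<partial>M)"
    using bdd_meas_conv_at[OF borel_prob_Uab g, of i] unfolding bdd_meas_def by (subst integral_distr) auto
  finally show ?thesis unfolding i_def .
qed

lemma integral_cut_sum_row:
  assumes S: "S \<subseteq> Idx" "finite S" and i: "i < m"
    and disj: "\<And>k. k \<in> {c+1..c+r} \<Longrightarrow> (i, k) \<notin> S" and g: "bdd_meas g"
  shows "(\<integral>\<omega>. g (cut_sum (S \<union> {i} \<times> {c+1..c+r}) \<omega>) \<partial>M)
    = (\<integral>\<omega>. (conv_at Uab i ^^ r) g (cut_sum S \<omega>) \<partial>M)"
  using disj g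
proof (induction r arbitrary: g)
  case 0 then show ?case by simp
next
  case (Suc r)
  have "S \<union> {i} \<times> {c+1..c+Suc r} = insert (i, c + Suc r) (S \<union> {i} \<times> {c+1..c+r})" by auto
  then have "(\<integral>\<omega>. g (cut_sum (S \<union> {i} \<times> {c+1..c+Suc r}) \<omega>) \<partial>M)
      = (\<integral>\<omega>. conv_at Uab i g (cut_sum (S \<union> {i} \<times> {c+1..c+r}) \<omega>) \<partial>M)"
    using S i Suc.prems by (simp only:) (subst integral_cut_sum_insert; auto)
  also have "\<dots> = (\<integral>\<omega>. (conv_at Uab i ^^ r) (conv_at Uab i g) (cut_sum S \<omega>) \<partial>M)"
    by (rule Suc.IH) (use Suc.prems in \<open>auto intro: bdd_meas_conv_at borel_prob_Uab\<close>)
  also have "\<dots> = (\<integral>\<omega>. (conv_at Uab i ^^ Suc r) g (cut_sum S \<omega>) \<partial>M)"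
    by (simp only: funpow_Suc_right comp_def)
  finally show ?case .
qed

lemma integral_cut_sum_block:
  assumes S: "S \<subseteq> Idx" "finite S" and j: "j \<le> m"
    and disj: "S \<inter> {0..<j} \<times> {c+1..c+K} = {}" and g: "bdd_meas g"
  shows "(\<integral>\<omega>. g (cut_sum (S \<union> {0..<j} \<times> {c+1..c+K}) \<omega>) \<partial>M)
    = (\<integral>\<omega>. block_conv K j g (cut_sum S \<omega>) \<partial>M)"
  using S j disj
proof (induction j arbitrary: S)
  case 0 then show ?case by simp
next
  case (Suc j)
  have "S \<union> {0..<Suc j} \<times> {c+1..c+K} = (S \<union> {j} \<times> {c+1..c+K}) \<union> {0..<j} \<times> {c+1..c+K}"
    by auto
  then have "(\<integral>\<omega>. g (cut_sum (S \<union> {0..<Suc j} \<times> {c+1..c+K}) \<omega>) \<partial>M)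
      = (\<integral>\<omega>. block_conv K j g (cut_sum (S \<union> {j} \<times> {c+1..c+K}) \<omega>) \<partial>M)"
    using Suc.prems by (simp only:) (rule Suc.IH; auto)
  also have "\<dots> = (\<integral>\<omega>. (conv_at Uab j ^^ K) (block_conv K j g) (cut_sum S \<omega>) \<partial>M)"
    by (rule integral_cut_sum_row) (use Suc.prems g in \<open>auto intro: bdd_meas_block_conv\<close>)
  finally show ?case by simp
qed

lemma integral_log_walk_rounds:
  assumes g: "bdd_meas g"
  shows "(\<integral>\<omega>. g (log_walk (j * K) \<omega>) \<partial>M) = (block_conv K m ^^ j) g (\<lambda>_. 0)"
  using g
proof (induction j arbitrary: g)
  case 0
  then show ?case by (simp add: cut_sum_def prob_space)
next
  case (Suc j)
  have "{0..<m} \<times> {1..Suc j * K} = {0..<m} \<times> {1..j * K} \<union> {0..<m} \<times> {j*K+1..j*K+K}" by auto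
  then have "(\<integral>\<omega>. g (log_walk (Suc j * K) \<omega>) \<partial>M) = (\<integral>\<omega>. block_conv K m g (log_walk (j * K) \<omega>) \<partial>M)"
    using Suc.prems by (simp only:) (rule integral_cut_sum_block; auto)
  also have "\<dots> = (block_conv K m ^^ j) (block_conv K m g) (\<lambda>_. 0)"
    by (rule Suc.IH) (use Suc.prems in \<open>auto intro: bdd_meas_block_conv\<close>)
  finally show ?case by (simp only: funpow_Suc_right comp_def)
qed

lemma integral_log_walk:
  assumes g: "bdd_meas g" and K: "0 < K"
  shows "(\<integral>\<omega>. g (log_walk n \<omega>) \<partial>M) = (block_conv K m ^^ (n div K)) (block_conv (n mod K) m g) (\<lambda>_. 0)"
proof -
  define N where "N = n div K * K"
  have "N + n mod K = n" unfolding N_def by simp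
  then have "{0..<m} \<times> {1..n} = {0..<m} \<times> {1..N} \<union> {0..<m} \<times> {N+1..N + n mod K}" by auto
  then have "(\<integral>\<omega>. g (log_walk n \<omega>) \<partial>M) = (\<integral>\<omega>. block_conv (n mod K) m g (log_walk N \<omega>) \<partial>M)"
    using g by (simp only:) (rule integral_cut_sum_block; auto)
  also have "\<dots> = (block_conv K m ^^ (n div K)) (block_conv (n mod K) m g) (\<lambda>_. 0)"
    unfolding N_def by (rule integral_log_walk_rounds) (use g in \<open>auto intro: bdd_meas_block_conv\<close>)
  finally show ?thesis .
qed

lemma log_walk_eq_sum:
  assumes "i < m"
  shows "log_walk n \<omega> i = (\<Sum>k\<in>{1..n}. log_cut (i, k) \<omega>)"
proof -
  have "log_walk n \<omega> i =
      (\<Sum>j\<in>{0..<m}. \<Sum>k\<in>{1..n}. if j = i then log_cut (j, k) \<omega> else 0)"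
    unfolding cut_sum_def by (auto simp: sum.cartesian_product case_prod_beta intro!: sum.cong)
  also have "\<dots> = (\<Sum>j\<in>{0..<m}. if j = i then (\<Sum>k\<in>{1..n}. log_cut (j, k) \<omega>) else 0)"
    by (intro sum.cong) auto
  finally show ?thesis using assms by simp
qed

lemma prod_cuts_eq_powr_log_walk:
  assumes "\<omega> \<in> space M" "i < m"
  shows "(\<Prod>k\<in>{1..n}. P i k \<omega>) = B powr log_walk n \<omega> i"
proof -
  have "B powr (\<Sum>k\<in>{1..n}. log_cut (i, k) \<omega>) = (\<Prod>k\<in>{1..n}. B powr log_cut (i, k) \<omega>)"
    using B_gt_1 by (intro powr_sum) auto
  also have "\<dots> = (\<Prod>k\<in>{1..n}. P i k \<omega>)"
    using B_gt_1 P_pos assms by (intro prod.cong) (auto simp: log_cut_def)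
  finally show ?thesis unfolding log_walk_eq_sum[OF assms(2)] by (rule sym)
qed

lemma integral_log_walk_bound:
  assumes k: "2 \<le> spread_len k" and g: "bdd_meas g" "diag_mean m g A" and C: "\<And>s. \<bar>g s\<bar> \<le> C"
  shows "\<bar>(\<integral>\<omega>. g (log_walk n \<omega>) \<partial>M) - A\<bar> \<le> (1 - doeblin_const m k)^(n div Suc k) * (\<bar>A\<bar> + C)"
proof -
  let ?q = "doeblin_const m k" and ?j = "n div Suc k"
  let ?W = "(block_conv (Suc k) m ^^ ?j) (block_conv (n mod Suc k) m g) (\<lambda>_. 0)"
  have "-C \<le> g s \<and> g s \<le> C" for s using C[of s] by (auto simp: abs_le_iff)
  then have "A - (1 - ?q)^?j * (A - (-C)) \<le> ?W \<and> ?W \<le> A + (1 - ?q)^?j * (C - A)"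
    by (intro block_conv_iter_bounds[OF k] bdd_meas_block_conv diag_mean_block_conv block_conv_bounds g)
  moreover have "0 \<le> 1 - ?q" using doeblin_const_le_1 k by simp
  then have "(1 - ?q)^?j * (A + C) \<le> (1 - ?q)^?j * (\<bar>A\<bar> + C)"
    "(1 - ?q)^?j * (C - A) \<le> (1 - ?q)^?j * (\<bar>A\<bar> + C)"
    by (auto intro!: mult_left_mono)
  ultimately show ?thesis
    unfolding integral_log_walk[OF g(1) zero_less_Suc[of k], where n=n] by (auto simp: abs_le_iff)
qed

lemma integral_log_walk_tendsto:
  assumes g: "bdd_meas g" "diag_mean m g A"
  shows "(\<lambda>n. \<integral>\<omega>. g (log_walk n \<omega>) \<partial>M) \<longlonglongrightarrow> A"
proof -
  obtain C where C: "\<And>s. \<bar>g s\<bar> \<le> C" using g unfolding bdd_meas_def by auto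
  obtain k where k: "2 \<le> spread_len k" using spread_len_unbounded by blast
  let ?q = "doeblin_const m k"
  have "(\<lambda>n. (1 - ?q)^(n div Suc k)) \<longlonglongrightarrow> 0"
    using filterlim_compose[OF LIMSEQ_power_zero filterlim_at_top_div_const_nat, of "1 - ?q" "Suc k"]
      doeblin_const_pos doeblin_const_le_1 k
    by (simp add: comp_def)
  then have lim0: "(\<lambda>n. (1 - ?q)^(n div Suc k) * (\<bar>A\<bar> + C)) \<longlonglongrightarrow> 0"
    using tendsto_mult_left_zero by blast
  have "(\<lambda>n. (\<integral>\<omega>. g (log_walk n \<omega>) \<partial>M) - A) \<longlonglongrightarrow> 0"
    using integral_log_walk_bound[OF k g C] by (intro Lim_null_comparison[OF always_eventually lim0]) auto
  then show ?thesis by (rule LIM_zero_cancel)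
qed

lemma strong_benford_conv_of_diag_equivariant:
  assumes Y: "\<And>n \<omega>. \<omega> \<in> space M \<Longrightarrow> Y n \<omega> = B powr G (log_walk n \<omega>)"
    and G[measurable]: "G \<in> borel_measurable coords"
    and G_shift: "\<And>t s. G (diag_shift m t s) = G s + t"
  shows "strong_benford_conv M B Y"
  unfolding strong_benford_conv_def
proof
  fix D assume D: "D \<in> {1..B}"
  define d where "d = log B D"
  have d: "0 \<le> d" "d \<le> 1" using D B_gt_1 by (auto simp: d_def)
  define h where "h s = (if frac (G s) \<le> d then 1 else 0 :: real)" for s
  have h: "bdd_meas h" unfolding bdd_meas_def h_def by (auto intro!: exI[of _ 1])
  have "diag_mean m h d"
    unfolding diag_mean_def h_def G_shift using integral_frac_add_le[OF d] by simp
  then have "(\<lambda>n. \<integral>\<omega>. h (log_walk n \<omega>) \<partial>M) \<longlonglongrightarrow> d"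
    by (rule integral_log_walk_tendsto[OF h])
  moreover have "measure M {\<omega> \<in> space M. significand B (Y n \<omega>) \<le> D}
      = (\<integral>\<omega>. h (log_walk n \<omega>) \<partial>M)" for n
  proof -
    have "measure M {\<omega> \<in> space M. significand B (Y n \<omega>) \<le> D}
        = (\<integral>\<omega>. indicator {\<omega> \<in> space M. significand B (Y n \<omega>) \<le> D} \<omega> \<partial>M)"
      by (simp add: Int_absorb2)
    also have "\<dots> = (\<integral>\<omega>. h (log_walk n \<omega>) \<partial>M)"
      using D B_gt_1
      by (intro Bochner_Integration.integral_cong refl)
        (simp add: Y significand_powr_le_iff h_def d_def indicator_def)
    finally show ?thesis .
  qed
  ultimately show "(\<lambda>n. measure M {\<omega> \<in> space M. significand B (Y n \<omega>) \<le> D}) \<longlonglongrightarrow> log B D"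
    unfolding d_def by simp
qed

end

section \<open>Frame perimeters\<close>

lemma Vol_1_eq: "Vol m 1 bx = 2 ^ (m - 1) * (\<Sum>i<m. side_len bx i)"
proof -
  have "{I. I \<subseteq> {0..<m} \<and> card I = 1} = (\<lambda>i. {i}) ` {..<m}"
    by (auto simp: card_1_singleton_iff)
  then have "(\<Sum>I\<in>{I. I \<subseteq> {0..<m} \<and> card I = 1}. \<Prod>i\<in>I. side_len bx i) = (\<Sum>i<m. side_len bx i)"
    by (simp add: sum.reindex)
  then show ?thesis unfolding Vol_def by simp
qed

lemma side_len_iterate:
  fixes Bx :: "nat \<Rightarrow> box" and p :: "nat \<Rightarrow> real"
  assumes "Bx 0 = B0" and "\<And>n. 1 \<le> n \<Longrightarrow> side_len (Bx n) i = p n * side_len (Bx (n - 1)) i"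
  shows "side_len (Bx n) i = side_len B0 i * (\<Prod>k\<in>{1..n}. p k)"
proof (induction n)
  case (Suc n)
  then show ?case using assms(2)[of "Suc n"] by (simp add: atLeastAtMostSuc_conv ac_simps)
qed (simp add: assms(1))

lemma log_sum_powr_diag_shift:
  assumes "1 < B" and "0 < m" and "\<And>i. i < m \<Longrightarrow> 0 < c i"
  shows "log B (\<Sum>i<m. c i * B powr diag_shift m t s i) = log B (\<Sum>i<m. c i * B powr s i) + t"
proof -
  have "(\<Sum>i<m. c i * B powr diag_shift m t s i) = B powr t * (\<Sum>i<m. c i * B powr s i)"
    by (simp add: diag_shift_def sum_distrib_left powr_add ac_simps)
  moreover have "0 < (\<Sum>i<m. c i * B powr s i)"
    using assms by (intro sum_pos) auto
  ultimately show ?thesis using assms(1) by (simp add: log_mult)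
qed

theorem corollary1p10:
  fixes M :: "'a measure" and B a b :: real and m :: nat
    and B0 :: box and Bx :: "nat \<Rightarrow> 'a \<Rightarrow> box"
    and P :: "nat \<Rightarrow> nat \<Rightarrow> 'a \<Rightarrow> real"
  assumes "prob_space M"
    and "B > 1" and "a < b" and "b \<le> 0"
    and "m \<ge> 1" and "is_box m B0"
    and "\<And>i n. i < m \<Longrightarrow> n \<ge> 1 \<Longrightarrow> P i n \<in> borel_measurable M"
    and "\<And>i n \<omega>. i < m \<Longrightarrow> n \<ge> 1 \<Longrightarrow> \<omega> \<in> space M \<Longrightarrow> P i n \<omega> \<in> {0<..<1}"
    and "prob_space.indep_vars M (\<lambda>_. borel) (\<lambda>(i, n). P i n) ({0..<m} \<times> {1..})"
    and "\<And>i n. i < m \<Longrightarrow> n \<ge> 1 \<Longrightarrow>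
           distr M lborel (\<lambda>\<omega>. log B (P i n \<omega>)) = uniform_measure lborel {a<..<b}"
    and "\<And>\<omega>. \<omega> \<in> space M \<Longrightarrow> Bx 0 \<omega> = B0"
    and "\<And>n \<omega>. \<omega> \<in> space M \<Longrightarrow> is_box m (Bx n \<omega>)"
    and "\<And>n \<omega>. n \<ge> 1 \<Longrightarrow> \<omega> \<in> space M \<Longrightarrow> box_set m (Bx n \<omega>) \<subseteq> box_set m (Bx (n - 1) \<omega>)"
    and "\<And>n i \<omega>. n \<ge> 1 \<Longrightarrow> i < m \<Longrightarrow> \<omega> \<in> space M \<Longrightarrow>
           side_len (Bx n \<omega>) i = P i n \<omega> * side_len (Bx (n - 1) \<omega>) i"
  shows "strong_benford_conv M B (\<lambda>n \<omega>. Vol m 1 (Bx n \<omega>))"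
proof -
  interpret log_uniform_cuts a b M m B P
  proof (intro log_uniform_cuts.intro uniform_kicks.intro log_uniform_cuts_axioms.intro)
    show "0 < P i n \<omega>" if "i < m" "1 \<le> n" "\<omega> \<in> space M" for i n \<omega>
      using assms(8)[OF that] by simp
  qed (fact assms(1-3,7,9,10))+
  define c where "c i = 2 ^ (m - 1) * side_len B0 i" for i
  define G where "G s = log B (\<Sum>i<m. c i * B powr s i)" for s :: "nat \<Rightarrow> real"
  have c_pos: "0 < c i" if "i < m" for i
    using assms(6) that unfolding c_def is_box_def side_len_def by auto
  have "Vol m 1 (Bx n \<omega>) = B powr G (log_walk n \<omega>)" if \<omega>: "\<omega> \<in> space M" for n \<omega>
  proof -
    have "side_len (Bx n \<omega>) i = side_len B0 i * B powr log_walk n \<omega> i" if "i < m" for i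
      using side_len_iterate[of "\<lambda>n. Bx n \<omega>", OF assms(11)[OF \<omega>] assms(14)[OF _ that \<omega>]]
        prod_cuts_eq_powr_log_walk[OF \<omega> that] by simp
    moreover have "0 < (\<Sum>i<m. c i * B powr log_walk n \<omega> i)"
      using c_pos assms(2,5) by (intro sum_pos) (auto simp: lessThan_empty_iff)
    ultimately show ?thesis
      using assms(2) unfolding Vol_1_eq G_def c_def by (simp add: sum_distrib_left mult.assoc)
  qed
  moreover have "G \<in> borel_measurable coords"
    unfolding G_def by measurable
  moreover have "G (diag_shift m t s) = G s + t" for t s
    unfolding G_def using assms(2,5) c_pos by (intro log_sum_powr_diag_shift) auto
  ultimately show ?thesis
    by (rule strong_benford_conv_of_diag_equivariant)
qed

end
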